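(* Let $F$ be a field of characteristic $0$, let $A$ be the free associative $F$-algebra without unity on free generators $x,y$, let $I$ be the two-sided ideal of $A$ generated by the following elements: (i) all monomials of degree $8$; (ii) all monomials of degree greater than $2$ in $x$; (iii) all monic monomials of degree $7$ except $yxy^3xy$ and $y^2xyxy^2$; (iv) all monic monomials of degree less than $7$ which do not divide either of the monomials $yxy^3xy$ and $y^2xyxy^2$; (v) the polynomial $2xy^3xy-5yxyxy^2-2yxy^3x+5y^2xyxy$; (vi) the polynomial $2yxy^3xy-5y^2xyxy^2$; let $B=A/I$ and let $L=[B]$. Then $L$ is a $5$-Engel Lie algebra such that the group $L^*$ is not $5$-Engel.
   Context: For monic monomials $m,n$ in $x,y$, $m$ divides $n$ if $n=m_1 m m_2$ for some monic monomials $m_1,m_2$ (possibly equal to $1$). $[B]$ is the Lie algebra on $B$ with bracket $[a,b]=ab-ba$; it is nilpotent since $B^8=0$. For a nilpotent Lie algebra $L$ over a field of characteristic $0$, $L^*$ denotes the group with underlying set $L$ and multiplication given by the Baker–Campbell–Hausdorff formula $u*v=\log(e^ue^v)=u+v+\tfrac12[u,v]+\cdots$. Set $[x,{}_{(1)}y]=[x,y]$, $[x,{}_{(k+1)}y]=[[x,{}_{(k)}y],y]$; a Lie algebra is $n$-Engel if $[u,{}_{(n)}v]=0$ for all $u,v$. For a group, $(x,y)=x^{-1}y^{-1}xy$, $(x,{}_{(k+1)}y)=((x,{}_{(k)}y),y)$; a group is $n$-Engel if $(u,{}_{(n)}v)=1$ for all $u,v$. *)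

theory Defs
  imports Main
begin

datatype gen = gx | gy

text \<open>Elements of A: finitely supported functions from words to F with zero
  coefficient at the empty word (no unity).\<close>

definition FA :: "(gen list \<Rightarrow> 'a::field) set" where
  "FA = {p. finite {w. p w \<noteq> 0} \<and> p [] = 0}"

definition pzero :: "gen list \<Rightarrow> 'a::field" where "pzero = (\<lambda>w. 0)"
definition padd :: "(gen list \<Rightarrow> 'a::field) \<Rightarrow> _ \<Rightarrow> _" where
  "padd p q = (\<lambda>w. p w + q w)"
definition psmul :: "'a::field \<Rightarrow> (gen list \<Rightarrow> 'a) \<Rightarrow> _" where
  "psmul c p = (\<lambda>w. c * p w)"
definition psub :: "(gen list \<Rightarrow> 'a::field) \<Rightarrow> _ \<Rightarrow> _" where
  "psub p q = (\<lambda>w. p w - q w)"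
definition pmul :: "(gen list \<Rightarrow> 'a::field) \<Rightarrow> _ \<Rightarrow> _" where
  "pmul p q = (\<lambda>w. \<Sum>i\<le>length w. p (take i w) * q (drop i w))"

definition mon :: "gen list \<Rightarrow> gen list \<Rightarrow> 'a::field" where
  "mon w = (\<lambda>v. if v = w then 1 else 0)"

definition divides :: "gen list \<Rightarrow> gen list \<Rightarrow> bool" where
  "divides m n \<longleftrightarrow> (\<exists>m1 m2. n = m1 @ m @ m2)"

definition w1 :: "gen list" where "w1 = [gy,gx,gy,gy,gy,gx,gy]"
definition w2 :: "gen list" where "w2 = [gy,gy,gx,gy,gx,gy,gy]"

definition rel5 :: "gen list \<Rightarrow> 'a::field" where
  "rel5 = padd (padd (psmul 2 (mon [gx,gy,gy,gy,gx,gy]))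
                     (psmul (-5) (mon [gy,gx,gy,gx,gy,gy])))
               (padd (psmul (-2) (mon [gy,gx,gy,gy,gy,gx]))
                     (psmul 5 (mon [gy,gy,gx,gy,gx,gy])))"

definition rel6 :: "gen list \<Rightarrow> 'a::field" where
  "rel6 = padd (psmul 2 (mon w1)) (psmul (-5) (mon w2))"

definition Igens :: "(gen list \<Rightarrow> 'a::field) set" where
  "Igens =
     {mon w | w. length w = 8}
   \<union> {mon w | w. w \<noteq> [] \<and> count_list w gx > 2}
   \<union> {mon w | w. length w = 7 \<and> w \<noteq> w1 \<and> w \<noteq> w2}
   \<union> {mon w | w. w \<noteq> [] \<and> length w < 7 \<and> \<not> divides w w1 \<and> \<not> divides w w2}
   \<union> {rel5, rel6}"

definition is_ideal :: "(gen list \<Rightarrow> 'a::field) set \<Rightarrow> bool" where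
  "is_ideal J \<longleftrightarrow> J \<subseteq> FA \<and> pzero \<in> J \<and>
     (\<forall>p\<in>J. \<forall>q\<in>J. padd p q \<in> J) \<and> (\<forall>c. \<forall>p\<in>J. psmul c p \<in> J) \<and>
     (\<forall>a\<in>FA. \<forall>p\<in>J. pmul a p \<in> J \<and> pmul p a \<in> J)"

definition Iid :: "(gen list \<Rightarrow> 'a::field) set" where
  "Iid = \<Inter>{J. is_ideal J \<and> Igens \<subseteq> J}"

definition cls :: "(gen list \<Rightarrow> 'a::field) \<Rightarrow> (gen list \<Rightarrow> 'a) set" where
  "cls p = {q \<in> FA. psub p q \<in> Iid}"

definition Bset :: "(gen list \<Rightarrow> 'a::field) set set" where
  "Bset = cls ` FA"

definition rep :: "(gen list \<Rightarrow> 'a::field) set \<Rightarrow> gen list \<Rightarrow> 'a" where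
  "rep X = (SOME p. p \<in> X)"

definition zeroB :: "(gen list \<Rightarrow> 'a::field) set" where "zeroB = cls pzero"
definition addB :: "(gen list \<Rightarrow> 'a::field) set \<Rightarrow> _ \<Rightarrow> _" where
  "addB X Y = cls (padd (rep X) (rep Y))"
definition subB :: "(gen list \<Rightarrow> 'a::field) set \<Rightarrow> _ \<Rightarrow> _" where
  "subB X Y = cls (psub (rep X) (rep Y))"
definition negB :: "(gen list \<Rightarrow> 'a::field) set \<Rightarrow> _" where
  "negB X = cls (psmul (-1) (rep X))"
definition smulB :: "'a::field \<Rightarrow> (gen list \<Rightarrow> 'a) set \<Rightarrow> _" where
  "smulB c X = cls (psmul c (rep X))"
definition mulB :: "(gen list \<Rightarrow> 'a::field) set \<Rightarrow> _ \<Rightarrow> _" where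
  "mulB X Y = cls (pmul (rep X) (rep Y))"

text \<open>Positive powers (bpow X 0 is just a dummy value, never used below).\<close>
fun bpow :: "(gen list \<Rightarrow> 'a::field) set \<Rightarrow> nat \<Rightarrow> (gen list \<Rightarrow> 'a) set" where
  "bpow X 0 = zeroB"
| "bpow X (Suc 0) = X"
| "bpow X (Suc (Suc n)) = mulB (bpow X (Suc n)) X"

definition sumB :: "(gen list \<Rightarrow> 'a::field) set list \<Rightarrow> (gen list \<Rightarrow> 'a) set" where
  "sumB xs = foldr addB xs zeroB"

definition nilidx :: "(gen list \<Rightarrow> 'a::field) set \<Rightarrow> nat" where
  "nilidx X = (LEAST n. n \<ge> 1 \<and> bpow X n = zeroB)"

definition nilsum :: "(nat \<Rightarrow> 'a::field) \<Rightarrow> (gen list \<Rightarrow> 'a) set \<Rightarrow> (gen list \<Rightarrow> 'a) set" where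
  "nilsum c X = sumB (map (\<lambda>k. smulB (c k) (bpow X k)) [1..<nilidx X])"

definition expm1B :: "(gen list \<Rightarrow> 'a::field_char_0) set \<Rightarrow> _" where
  "expm1B X = nilsum (\<lambda>k. 1 / fact k) X"
definition log1pB :: "(gen list \<Rightarrow> 'a::field_char_0) set \<Rightarrow> _" where
  "log1pB X = nilsum (\<lambda>k. (-1) ^ (k + 1) / of_nat k) X"

text \<open>Baker-Campbell-Hausdorff product u*v = log(e^u e^v), where
  e^u e^v = 1 + (E u + E v + E u E v) with E u = e^u - 1.\<close>
definition bch :: "(gen list \<Rightarrow> 'a::field_char_0) set \<Rightarrow> _ \<Rightarrow> _" where
  "bch u v = log1pB (addB (addB (expm1B u) (expm1B v)) (mulB (expm1B u) (expm1B v)))"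

text \<open>Group commutator (u,v) = u^-1 v^-1 u v in L^*; inverse of u in L^* is -u.\<close>
definition gcomm :: "(gen list \<Rightarrow> 'a::field_char_0) set \<Rightarrow> _ \<Rightarrow> _" where
  "gcomm u v = bch (bch (bch (negB u) (negB v)) u) v"

primrec giter :: "(gen list \<Rightarrow> 'a::field_char_0) set \<Rightarrow> _ \<Rightarrow> nat \<Rightarrow> _" where
  "giter u v 0 = u"
| "giter u v (Suc k) = gcomm (giter u v k) v"

definition lbr :: "(gen list \<Rightarrow> 'a::field_char_0) set \<Rightarrow> _ \<Rightarrow> _" where
  "lbr u v = subB (mulB u v) (mulB v u)"

primrec liter :: "(gen list \<Rightarrow> 'a::field_char_0) set \<Rightarrow> _ \<Rightarrow> nat \<Rightarrow> _" where
  "liter u v 0 = u"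
| "liter u v (Suc k) = lbr (liter u v k) v"

end

theory Submission
  imports Defs "HOL-Library.Sublist"
begin

text \<open>
  Record a polynomial by 26 coordinates: its coefficients at the nonempty subwords of
  w1 = yxy^3xy and w2 = y^2xyxy^2, those of degree 6 and 7 combined so that (v) and (vi) get zero
  coordinates. Every generator of I has zero coordinates; conversely, a polynomial with zero
  coordinates becomes, after subtracting multiples of (v) and (vi), a combination of monomials
  that are not subwords of w1 or w2, each a multiple of a monomial generator. So I is the kernel
  of the coordinate map, which is multiplicative, and B is a concrete 26-dimensional nilpotent
  algebra. There the Engel identity [u,_5 v] = 0 is a polynomial identity in the 52 coordinates
  of u and v, whereas the BCH group commutator (x,_5 y) evaluates to 12/5 yxy^3xy, which is
  nonzero.
\<close>

type_synonym 'a ncpoly = "gen list \<Rightarrow> 'a"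

lemma FA_pzero: "pzero \<in> FA"
  by (simp add: FA_def pzero_def)

lemma FA_padd: "p \<in> FA \<Longrightarrow> q \<in> FA \<Longrightarrow> padd p q \<in> FA"
  unfolding FA_def padd_def
  by (auto intro: finite_subset[of _ "{w. p w \<noteq> 0} \<union> {w. q w \<noteq> 0}"])

lemma FA_psub: "p \<in> FA \<Longrightarrow> q \<in> FA \<Longrightarrow> psub p q \<in> FA"
  unfolding FA_def psub_def
  by (auto intro: finite_subset[of _ "{w. p w \<noteq> 0} \<union> {w. q w \<noteq> 0}"])

lemma FA_psmul: "p \<in> FA \<Longrightarrow> psmul c p \<in> FA"
  unfolding FA_def psmul_def
  by (auto intro: finite_subset[of _ "{w. p w \<noteq> 0}"])

lemma FA_mon: "w \<noteq> [] \<Longrightarrow> mon w \<in> FA"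
  unfolding FA_def mon_def by auto

lemma FA_Nil: "p \<in> FA \<Longrightarrow> p [] = 0"
  by (simp add: FA_def)

lemma FA_pmul:
  assumes "p \<in> FA" "q \<in> FA"
  shows "pmul p q \<in> FA"
proof -
  let ?P = "{w. p w \<noteq> 0}" and ?Q = "{w. q w \<noteq> 0}"
  have "{w. pmul p q w \<noteq> 0} \<subseteq> (\<lambda>(u, v). u @ v) ` (?P \<times> ?Q)"
  proof
    fix w assume "w \<in> {w. pmul p q w \<noteq> 0}"
    then obtain i where "p (take i w) * q (drop i w) \<noteq> 0"
      unfolding pmul_def by (meson mem_Collect_eq sum.not_neutral_contains_not_neutral)
    then have "(take i w, drop i w) \<in> ?P \<times> ?Q"
      by simp
    then show "w \<in> (\<lambda>(u, v). u @ v) ` (?P \<times> ?Q)"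
      by (metis (mono_tags, lifting) append_take_drop_id case_prod_conv image_eqI)
  qed
  moreover have "finite ?P" "finite ?Q"
    using assms by (simp_all add: FA_def)
  ultimately have "finite {w. pmul p q w \<noteq> 0}"
    by (meson finite_SigmaI finite_imageI finite_subset)
  then show ?thesis
    using assms by (simp add: FA_def pmul_def)
qed

lemma FA_rel5: "rel5 \<in> FA"
  unfolding rel5_def by (intro FA_padd FA_psmul FA_mon) simp_all

lemma FA_rel6: "rel6 \<in> FA"
  unfolding rel6_def w1_def w2_def by (intro FA_padd FA_psmul FA_mon) simp_all

lemma pmul_Nil [simp]: "pmul p q [] = p [] * q []"
  by (simp add: pmul_def)

lemma pmul_Cons [simp]: "pmul p q (a # w) = p [] * q (a # w) + pmul (\<lambda>u. p (a # u)) q w"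
  unfolding pmul_def by (simp add: sum.atMost_Suc_shift del: sum.atMost_Suc)

lemma pmul_mon_mon: "pmul (mon u) (mon v) = mon (u @ v)"
proof
  fix w :: "gen list"
  have "take i w = u \<and> drop i w = v \<longleftrightarrow> i = length u \<and> w = u @ v" if "i \<le> length w" for i
    using that by (auto simp: min_def)
  then have "pmul (mon u) (mon v) w = (\<Sum>i\<le>length w. if i = length u \<and> w = u @ v then 1 else 0)"
    unfolding pmul_def mon_def by (intro sum.cong) auto
  also have "\<dots> = mon (u @ v) w"
    by (auto simp: mon_def)
  finally show "pmul (mon u) (mon v) w = mon (u @ v) w" .
qed

lemma ideal_mem_if_monomials:
  assumes J: "is_ideal J" and p: "p \<in> FA" and mons: "\<And>w. p w \<noteq> 0 \<Longrightarrow> mon w \<in> J"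
  shows "p \<in> J"
proof -
  have "q \<in> J" if "finite S" "{w. q w \<noteq> 0} \<subseteq> S" "\<And>w. q w \<noteq> 0 \<Longrightarrow> mon w \<in> J" for S q
    using that
  proof (induction S arbitrary: q rule: finite_induct)
    case empty
    then have "q = pzero"
      by (simp add: fun_eq_iff pzero_def)
    then show ?case
      using J by (simp add: is_ideal_def)
  next
    case (insert a S)
    have "{w. (q (a := 0)) w \<noteq> 0} \<subseteq> S"
      using insert.prems(1) by auto
    moreover have "mon w \<in> J" if "(q (a := 0)) w \<noteq> 0" for w
      using that insert.prems(2) by (metis fun_upd_apply)
    ultimately have rest: "q (a := 0) \<in> J"
      by (rule insert.IH)
    show ?case
    proof (cases "q a = 0")
      case True
      then show ?thesis
        using rest by (simp add: fun_upd_idem)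
    next
      case False
      then have "padd (psmul (q a) (mon a)) (q (a := 0)) \<in> J"
        using J rest insert.prems(2) unfolding is_ideal_def by blast
      moreover have "padd (psmul (q a) (mon a)) (q (a := 0)) = q"
        by (simp add: fun_eq_iff padd_def psmul_def mon_def)
      ultimately show ?thesis
        by simp
    qed
  qed
  then show ?thesis
    using p mons unfolding FA_def by blast
qed

text \<open>Coordinate vectors of elements of B (see coords); times_coord is the product of A
  transported along coords (lemma coords_pmul).\<close>

datatype 'a coord = Coord 'a 'a 'a 'a 'a 'a 'a 'a 'a 'a 'a 'a 'a 'a 'a 'a 'a 'a 'a 'a 'a 'a 'a 'a 'a 'a

instantiation coord :: (comm_ring_1) "{zero, plus, minus, times}"
begin

definition zero_coord :: "'a coord" where
  "0 = Coord 0 0 0 0 0 0 0 0 0 0 0 0 0 0 0 0 0 0 0 0 0 0 0 0 0 0"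

fun plus_coord :: "'a coord \<Rightarrow> 'a coord \<Rightarrow> 'a coord" where
  "(Coord a1 a2 a3 a4 a5 a6 a7 a8 a9 a10 a11 a12 a13
      a14 a15 a16 a17 a18 a19 a20 a21 a22 a23 a24 a25 a26) +
   (Coord b1 b2 b3 b4 b5 b6 b7 b8 b9 b10 b11 b12 b13
      b14 b15 b16 b17 b18 b19 b20 b21 b22 b23 b24 b25 b26) =
    Coord (a1 + b1) (a2 + b2) (a3 + b3) (a4 + b4) (a5 + b5) (a6 + b6) (a7 + b7)
    (a8 + b8) (a9 + b9) (a10 + b10) (a11 + b11) (a12 + b12) (a13 + b13) (a14 + b14)
    (a15 + b15) (a16 + b16) (a17 + b17) (a18 + b18) (a19 + b19) (a20 + b20) (a21 + b21)
    (a22 + b22) (a23 + b23) (a24 + b24) (a25 + b25) (a26 + b26)"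

fun minus_coord :: "'a coord \<Rightarrow> 'a coord \<Rightarrow> 'a coord" where
  "(Coord a1 a2 a3 a4 a5 a6 a7 a8 a9 a10 a11 a12 a13
      a14 a15 a16 a17 a18 a19 a20 a21 a22 a23 a24 a25 a26) -
   (Coord b1 b2 b3 b4 b5 b6 b7 b8 b9 b10 b11 b12 b13
      b14 b15 b16 b17 b18 b19 b20 b21 b22 b23 b24 b25 b26) =
    Coord (a1 - b1) (a2 - b2) (a3 - b3) (a4 - b4) (a5 - b5) (a6 - b6) (a7 - b7)
    (a8 - b8) (a9 - b9) (a10 - b10) (a11 - b11) (a12 - b12) (a13 - b13) (a14 - b14)
    (a15 - b15) (a16 - b16) (a17 - b17) (a18 - b18) (a19 - b19) (a20 - b20) (a21 - b21)
    (a22 - b22) (a23 - b23) (a24 - b24) (a25 - b25) (a26 - b26)"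

fun times_coord :: "'a coord \<Rightarrow> 'a coord \<Rightarrow> 'a coord" where
  "(Coord a1 a2 a3 a4 a5 a6 a7 a8 a9 a10 a11 a12 a13
      a14 a15 a16 a17 a18 a19 a20 a21 a22 a23 a24 a25 a26) *
   (Coord b1 b2 b3 b4 b5 b6 b7 b8 b9 b10 b11 b12 b13
      b14 b15 b16 b17 b18 b19 b20 b21 b22 b23 b24 b25 b26) =
    Coord
      0
      0
      (a1 * b2)
      (a2 * b1)
      (a2 * b2)
      (a1 * b4 + a3 * b1)
      (a1 * b5 + a3 * b2)
      (a2 * b3 + a4 * b2)
      (a2 * b4 + a5 * b1)
      (a2 * b5 + a5 * b2)
      (a1 * b8 + a3 * b3 + a6 * b2)
      (a1 * b10 + a3 * b5 + a7 * b2)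
      (a2 * b6 + a4 * b4 + a8 * b1)
      (a2 * b7 + a4 * b5 + a8 * b2)
      (a2 * b8 + a5 * b3 + a9 * b2)
      (a2 * b9 + a5 * b4 + a10 * b1)
      (a1 * b14 + a3 * b7 + a6 * b5 + a11 * b2)
      (a1 * b16 + a3 * b9 + a7 * b4 + a12 * b1)
      (a2 * b11 + a4 * b8 + a8 * b3 + a13 * b2)
      (a2 * b12 + a4 * b10 + a8 * b5 + a14 * b2)
      (a2 * b13 + a5 * b6 + a9 * b4 + a15 * b1)
      (a2 * b15 + a5 * b8 + a10 * b3 + a16 * b2)
      (5 * (a1 * b22 + a3 * b15 + a7 * b8 + a12 * b3 + a18 * b2)
        - 2 * (a2 * b19 + a5 * b11 + a9 * b8 + a15 * b3 + a21 * b2))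
      (a2 * b17 + a4 * b14 + a8 * b7 + a13 * b5 + a19 * b2
        + (a2 * b19 + a5 * b11 + a9 * b8 + a15 * b3 + a21 * b2))
      (5 * (a2 * b18 + a4 * b16 + a8 * b9 + a14 * b4 + a20 * b1)
        + 2 * (a2 * b19 + a5 * b11 + a9 * b8 + a15 * b3 + a21 * b2))
      (5 * (a4 * b22 + a8 * b15 + a14 * b8 + a20 * b3) + 2 * (a5 * b17 + a9 * b14 + a15 * b7 + a21 * b5)
        + a2 * b23 + 2 * (a2 * b24) + a25 * b2)"

instance ..

end

definition coords :: "'a::field ncpoly \<Rightarrow> 'a coord" where
  "coords p = Coord
    (p [gx]) (p [gy])
    (p [gx,gy]) (p [gy,gx]) (p [gy,gy])
    (p [gx,gy,gx]) (p [gx,gy,gy]) (p [gy,gx,gy]) (p [gy,gy,gx]) (p [gy,gy,gy])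
    (p [gx,gy,gx,gy]) (p [gx,gy,gy,gy]) (p [gy,gx,gy,gx]) (p [gy,gx,gy,gy]) (p [gy,gy,gx,gy])
    (p [gy,gy,gy,gx])
    (p [gx,gy,gx,gy,gy]) (p [gx,gy,gy,gy,gx]) (p [gy,gx,gy,gx,gy]) (p [gy,gx,gy,gy,gy])
    (p [gy,gy,gx,gy,gx]) (p [gy,gy,gy,gx,gy])
    (5 * p [gx,gy,gy,gy,gx,gy] - 2 * p [gy,gy,gx,gy,gx,gy])
    (p [gy,gx,gy,gx,gy,gy] + p [gy,gy,gx,gy,gx,gy])
    (5 * p [gy,gx,gy,gy,gy,gx] + 2 * p [gy,gy,gx,gy,gx,gy])
    (5 * p [gy,gx,gy,gy,gy,gx,gy] + 2 * p [gy,gy,gx,gy,gx,gy,gy])"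

lemma coords_padd: "coords (padd p q) = coords p + coords q"
  by (simp add: coords_def padd_def algebra_simps)

lemma coords_psub: "coords (psub p q) = coords p - coords q"
  by (simp add: coords_def psub_def algebra_simps)

lemma coords_psmul: "coords (psmul c p) = map_coord ((*) c) (coords p)"
  by (simp add: coords_def psmul_def algebra_simps)

lemma coords_pzero: "coords pzero = 0"
  by (simp add: coords_def pzero_def zero_coord_def)

lemma coords_pmul: "p [] = 0 \<Longrightarrow> q [] = 0 \<Longrightarrow> coords (pmul p q) = coords p * coords q"
  by (simp add: coords_def algebra_simps)

lemma coord_mult_zero [simp]:
  fixes x :: "'a::comm_ring_1 coord"
  shows "x * 0 = 0" "0 * x = 0"
  by (cases x; simp add: zero_coord_def)+

lemma coord_smult_zero [simp]: "map_coord ((*) c) 0 = (0 :: 'a::comm_ring_1 coord)"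
  by (simp add: zero_coord_def)

lemma coord_add_zero [simp]: "0 + 0 = (0 :: 'a::comm_ring_1 coord)"
  by (simp add: zero_coord_def)

lemma coord_diff_eq_0_iff: "x - y = (0 :: 'a::comm_ring_1 coord) \<longleftrightarrow> x = y"
  by (cases x; cases y) (simp add: zero_coord_def)

section \<open>The ideal I is the kernel of the coordinates\<close>

definition subwords_w12 :: "gen list list" where
  "subwords_w12 =
    [[gx], [gy], [gx,gy], [gy,gx], [gy,gy], [gx,gy,gx], [gx,gy,gy], [gy,gx,gy], [gy,gy,gx], [gy,gy,gy],
     [gx,gy,gx,gy], [gx,gy,gy,gy], [gy,gx,gy,gx], [gy,gx,gy,gy], [gy,gy,gx,gy], [gy,gy,gy,gx],
     [gx,gy,gx,gy,gy], [gx,gy,gy,gy,gx], [gy,gx,gy,gx,gy], [gy,gx,gy,gy,gy], [gy,gy,gx,gy,gx],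
     [gy,gy,gy,gx,gy], [gx,gy,gy,gy,gx,gy], [gy,gx,gy,gx,gy,gy], [gy,gx,gy,gy,gy,gx],
     [gy,gy,gx,gy,gx,gy], w1, w2]"

lemma set_subwords_w12: "set subwords_w12 = {w. w \<noteq> [] \<and> (divides w w1 \<or> divides w w2)}"
proof -
  have "insert [] (set subwords_w12) = set (sublists w1) \<union> set (sublists w2)"
    by (simp add: subwords_w12_def w1_def w2_def insert_commute)
  moreover have "[] \<notin> set subwords_w12"
    by (simp add: subwords_w12_def w1_def w2_def)
  moreover have "divides w v \<longleftrightarrow> w \<in> set (sublists v)" for w v
    unfolding in_set_sublists divides_def sublist_def by blast
  ultimately show ?thesis
    by (auto simp del: in_set_sublists)
qed

lemma coords_mon:
  assumes "w \<notin> set subwords_w12"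
  shows "coords (mon w) = 0"
proof -
  have "\<forall>s\<in>set subwords_w12. s \<noteq> w"
    using assms by blast
  then show ?thesis
    by (simp add: coords_def mon_def subwords_w12_def w1_def w2_def zero_coord_def)
qed

lemma coords_rel5: "coords rel5 = 0"
  by (simp add: rel5_def coords_def padd_def psmul_def mon_def zero_coord_def)

lemma coords_rel6: "coords rel6 = 0"
  by (simp add: rel6_def w1_def w2_def coords_def padd_def psmul_def mon_def zero_coord_def)

lemma is_ideal_ker_coords: "is_ideal {p \<in> FA. coords p = 0}"
  unfolding is_ideal_def
  by (auto simp: FA_pzero FA_padd FA_psmul FA_pmul FA_Nil
      coords_pzero coords_padd coords_psmul coords_pmul)

lemma Igens_subset_ker_coords: "Igens \<subseteq> {p \<in> FA. coords p = 0}"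
proof -
  have subwords: "\<forall>s\<in>set subwords_w12.
      length s \<le> 7 \<and> count_list s gx \<le> 2 \<and> (length s = 7 \<longrightarrow> s = w1 \<or> s = w2)"
    by (simp add: subwords_w12_def w1_def w2_def)
  have "w \<notin> set subwords_w12"
    if "length w = 8 \<or> count_list w gx > 2 \<or> (length w = 7 \<and> w \<noteq> w1 \<and> w \<noteq> w2)
        \<or> \<not> divides w w1 \<and> \<not> divides w w2" for w
  proof
    assume "w \<in> set subwords_w12"
    then have "length w \<le> 7" "count_list w gx \<le> 2" "length w = 7 \<longrightarrow> w = w1 \<or> w = w2"
        "divides w w1 \<or> divides w w2"
      using subwords set_subwords_w12 by blast+
    with that show False
      by auto
  qed
  then show ?thesis
    unfolding Igens_def
    by (auto intro!: FA_mon simp: coords_mon FA_rel5 FA_rel6 coords_rel5 coords_rel6)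
qed

lemma mon_mem_ideal_if_not_divides:
  assumes J: "is_ideal J" "Igens \<subseteq> J"
    and w: "w \<noteq> []" "\<not> divides w w1" "\<not> divides w w2"
  shows "mon w \<in> J"
proof -
  consider "length w \<ge> 8" | "length w = 7" | "length w < 7"
    by linarith
  then show ?thesis
  proof cases
    case 1
    have "mon (take 8 w) \<in> J"
      using 1 J(2) unfolding Igens_def by (auto intro!: exI[of _ "take 8 w"])
    moreover have "pmul (mon (take 8 w)) (mon (drop 8 w)) \<in> J" if "drop 8 w \<noteq> []"
      using J(1) \<open>mon (take 8 w) \<in> J\<close> FA_mon[OF that] unfolding is_ideal_def by blast
    ultimately show ?thesis
      by (cases "drop 8 w = []") (simp_all add: pmul_mon_mon)
  next
    case 2
    have "divides v v" for v
      unfolding divides_def by (metis append.left_neutral append_Nil2)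
    then have "w \<noteq> w1" "w \<noteq> w2"
      using w(2,3) by auto
    then show ?thesis
      using 2 J(2) unfolding Igens_def by blast
  next
    case 3
    then show ?thesis
      using w J(2) unfolding Igens_def by blast
  qed
qed

lemma vanishes_on_subwords_if_coords_eq_0:
  fixes q :: "'a::field_char_0 ncpoly"
  assumes "coords q = 0" "q [gy,gy,gx,gy,gx,gy] = 0" "q w2 = 0" "w \<in> set subwords_w12"
  shows "q w = 0"
  using assms by (auto simp: coords_def zero_coord_def subwords_w12_def w1_def w2_def)

lemma ker_coords_subset_ideal:
  fixes J :: "'a::field_char_0 ncpoly set"
  assumes J: "is_ideal J" "Igens \<subseteq> J"
  shows "{p \<in> FA. coords p = 0} \<subseteq> J"
proof
  fix p :: "'a ncpoly" assume "p \<in> {p \<in> FA. coords p = 0}"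
  then have p: "p \<in> FA" and cp: "coords p = 0"
    by auto
  have rel5: "rel5 \<in> J" and rel6: "rel6 \<in> J"
    using J(2) unfolding Igens_def by auto
  define a where "a = p [gy,gy,gx,gy,gx,gy]"
  define b where "b = p w2"
  define q where "q = padd (padd (psmul 5 p) (psmul (- a) rel5)) (psmul b rel6)"
  have qFA: "q \<in> FA"
    unfolding q_def by (intro FA_padd FA_psmul p FA_rel5 FA_rel6)
  have "coords q = 0"
    by (simp add: q_def coords_padd coords_psmul cp coords_rel5 coords_rel6)
  moreover have "q [gy,gy,gx,gy,gx,gy] = 0" "q w2 = 0"
    by (simp_all add: q_def a_def b_def padd_def psmul_def rel5_def rel6_def mon_def w1_def w2_def)
  ultimately have "w \<notin> set subwords_w12" if "q w \<noteq> 0" for w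
    using that vanishes_on_subwords_if_coords_eq_0 by blast
  moreover have "w \<noteq> []" if "q w \<noteq> 0" for w
    using that FA_Nil[OF qFA] by auto
  ultimately have "q \<in> J"
    by (intro ideal_mem_if_monomials[OF J(1) qFA] mon_mem_ideal_if_not_divides[OF J])
      (auto simp: set_subwords_w12)
  then have "psmul (1/5) (padd (padd q (psmul a rel5)) (psmul (- b) rel6)) \<in> J"
    using J(1) rel5 rel6 by (simp add: is_ideal_def)
  moreover have "psmul (1/5) (padd (padd q (psmul a rel5)) (psmul (- b) rel6)) = p"
    by (simp add: fun_eq_iff q_def padd_def psmul_def)
  ultimately show "p \<in> J"
    by simp
qed

lemma Iid_eq_ker_coords: "(Iid :: 'a::field_char_0 ncpoly set) = {p \<in> FA. coords p = 0}"
  unfolding Iid_def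
  using is_ideal_ker_coords Igens_subset_ker_coords ker_coords_subset_ideal
  by (intro equalityI Inter_lower) auto

definition coordsB :: "'a::field ncpoly set \<Rightarrow> 'a coord" where
  "coordsB X = coords (rep X)"

lemma cls_eq:
  fixes p :: "'a::field_char_0 ncpoly"
  assumes "p \<in> FA"
  shows "cls p = {q \<in> FA. coords q = coords p}"
  using assms unfolding cls_def Iid_eq_ker_coords
  by (auto simp: FA_psub coords_psub coord_diff_eq_0_iff)

lemma cls_in_Bset: "p \<in> FA \<Longrightarrow> cls p \<in> Bset"
  by (simp add: Bset_def)

lemma rep_cls:
  fixes p :: "'a::field_char_0 ncpoly"
  assumes "p \<in> FA"
  shows "rep (cls p) \<in> FA" "coords (rep (cls p)) = coords p"
proof -
  have "p \<in> cls p"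
    using assms by (simp add: cls_eq)
  then have "rep (cls p) \<in> cls p"
    unfolding rep_def by (rule someI[where P = "\<lambda>q. q \<in> cls p"])
  then show "rep (cls p) \<in> FA" "coords (rep (cls p)) = coords p"
    using assms by (simp_all add: cls_eq)
qed

lemma coordsB_cls:
  fixes p :: "'a::field_char_0 ncpoly"
  shows "p \<in> FA \<Longrightarrow> coordsB (cls p) = coords p"
  by (simp add: coordsB_def rep_cls)

lemma rep_in_FA:
  fixes X :: "'a::field_char_0 ncpoly set"
  shows "X \<in> Bset \<Longrightarrow> rep X \<in> FA"
  unfolding Bset_def using rep_cls by blast

lemma Bset_eq_iff_coordsB_eq:
  fixes X Y :: "'a::field_char_0 ncpoly set"
  assumes "X \<in> Bset" "Y \<in> Bset"
  shows "X = Y \<longleftrightarrow> coordsB X = coordsB Y"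
proof -
  obtain p q where "p \<in> FA" "X = cls p" "q \<in> FA" "Y = cls q"
    using assms by (auto simp: Bset_def)
  moreover have "cls p = cls q \<longleftrightarrow> coords p = coords q" if "p \<in> FA" "q \<in> FA" for p q :: "'a ncpoly"
    using that by (auto simp: cls_eq)
  ultimately show ?thesis
    by (simp add: coordsB_cls)
qed

lemma zeroB_coords: "(zeroB :: 'a::field_char_0 ncpoly set) \<in> Bset" "coordsB (zeroB :: 'a ncpoly set) = 0"
  by (simp_all add: zeroB_def cls_in_Bset FA_pzero coordsB_cls coords_pzero)

context
  fixes X Y :: "'a::field_char_0 ncpoly set"
begin

lemma addB_coords:
  "X \<in> Bset \<Longrightarrow> Y \<in> Bset \<Longrightarrow> addB X Y \<in> Bset \<and> coordsB (addB X Y) = coordsB X + coordsB Y"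
  by (simp add: addB_def cls_in_Bset FA_padd rep_in_FA coordsB_cls coords_padd coordsB_def[symmetric])

lemma subB_coords:
  "X \<in> Bset \<Longrightarrow> Y \<in> Bset \<Longrightarrow> subB X Y \<in> Bset \<and> coordsB (subB X Y) = coordsB X - coordsB Y"
  by (simp add: subB_def cls_in_Bset FA_psub rep_in_FA coordsB_cls coords_psub coordsB_def[symmetric])

lemma mulB_coords:
  "X \<in> Bset \<Longrightarrow> Y \<in> Bset \<Longrightarrow> mulB X Y \<in> Bset \<and> coordsB (mulB X Y) = coordsB X * coordsB Y"
  by (simp add: mulB_def cls_in_Bset FA_pmul rep_in_FA FA_Nil coordsB_cls coords_pmul
      coordsB_def[symmetric])

lemma smulB_coords:
  "X \<in> Bset \<Longrightarrow> smulB c X \<in> Bset \<and> coordsB (smulB c X) = map_coord ((*) c) (coordsB X)"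
  by (simp add: smulB_def cls_in_Bset FA_psmul rep_in_FA coordsB_cls coords_psmul coordsB_def[symmetric])

lemma negB_coords:
  "X \<in> Bset \<Longrightarrow> negB X \<in> Bset \<and> coordsB (negB X) = map_coord ((*) (-1)) (coordsB X)"
  by (simp add: negB_def cls_in_Bset FA_psmul rep_in_FA coordsB_cls coords_psmul coordsB_def[symmetric])

end

lemma coord_engel_5: "((\<lambda>w. w * y - y * w) ^^ 5) x = (0 :: 'a::comm_ring_1 coord)"
  by (cases x; cases y) (simp add: numeral_eq_Suc zero_coord_def, simp add: algebra_simps)

lemma liter_coords:
  fixes u v :: "'a::field_char_0 ncpoly set"
  assumes "u \<in> Bset" "v \<in> Bset"
  shows "liter u v k \<in> Bset \<and>
    coordsB (liter u v k) = ((\<lambda>w. w * coordsB v - coordsB v * w) ^^ k) (coordsB u)"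
  using assms by (induction k) (simp_all add: lbr_def subB_coords mulB_coords)

section \<open>Exponential, logarithm and group commutators\<close>

fun coord_pow :: "'a::comm_ring_1 coord \<Rightarrow> nat \<Rightarrow> 'a coord" where
  "coord_pow x 0 = 0"
| "coord_pow x (Suc 0) = x"
| "coord_pow x (Suc (Suc n)) = coord_pow x (Suc n) * x"

lemma coord_pow_8: "coord_pow x 8 = 0"
  by (cases x) (simp add: numeral_eq_Suc zero_coord_def)

lemma coord_pow_eq_0_mono:
  assumes "coord_pow x n = 0" "1 \<le> n" "n \<le> k"
  shows "coord_pow x k = 0"
  using assms(3,2,1)
proof (induction k rule: dec_induct)
  case (step k)
  then obtain m where "k = Suc m"
    using not0_implies_Suc by fastforce
  with step show ?case
    by simp
qed

definition coord_sum :: "'a::comm_ring_1 coord list \<Rightarrow> 'a coord" where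
  "coord_sum xs = foldr (+) xs 0"

lemma coord_sum_append_zeros:
  fixes xs ys :: "'a::comm_ring_1 coord list"
  assumes "\<forall>y\<in>set ys. y = 0"
  shows "coord_sum (xs @ ys) = coord_sum xs"
proof -
  have "foldr (+) ys 0 = (0 :: 'a coord)"
    using assms by (induction ys) simp_all
  then show ?thesis
    by (simp add: coord_sum_def)
qed

definition coord_series :: "(nat \<Rightarrow> 'a::comm_ring_1) \<Rightarrow> 'a coord \<Rightarrow> 'a coord" where
  "coord_series c x = coord_sum (map (\<lambda>k. map_coord ((*) (c k)) (coord_pow x k)) [1..<8])"

lemma coord_series_expand:
  "coord_series c x =
    (let x2 = x * x; x3 = x2 * x; x4 = x3 * x; x5 = x4 * x; x6 = x5 * x; x7 = x6 * x in
     coord_sum [map_coord ((*) (c 1)) x, map_coord ((*) (c 2)) x2, map_coord ((*) (c 3)) x3,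
       map_coord ((*) (c 4)) x4, map_coord ((*) (c 5)) x5, map_coord ((*) (c 6)) x6,
       map_coord ((*) (c 7)) x7])"
  by (simp add: coord_series_def upt_rec eval_nat_numeral Let_def)

lemma bpow_coords:
  fixes X :: "'a::field_char_0 ncpoly set"
  shows "X \<in> Bset \<Longrightarrow> bpow X n \<in> Bset \<and> coordsB (bpow X n) = coord_pow (coordsB X) n"
  by (induction X n rule: bpow.induct) (simp_all add: zeroB_coords mulB_coords)

lemma sumB_coords:
  fixes Xs :: "'a::field_char_0 ncpoly set list"
  shows "\<forall>X\<in>set Xs. X \<in> Bset \<Longrightarrow> sumB Xs \<in> Bset \<and> coordsB (sumB Xs) = coord_sum (map coordsB Xs)"
  by (induction Xs) (simp_all add: sumB_def coord_sum_def zeroB_coords addB_coords)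

lemma nilsum_coords:
  fixes X :: "'a::field_char_0 ncpoly set"
  assumes X: "X \<in> Bset"
  shows "nilsum c X \<in> Bset \<and> coordsB (nilsum c X) = coord_series c (coordsB X)"
proof -
  have pow: "bpow X k \<in> Bset" "coordsB (bpow X k) = coord_pow (coordsB X) k" for k
    using bpow_coords[OF X] by blast+
  have "bpow X 8 = zeroB"
    using pow zeroB_coords Bset_eq_iff_coordsB_eq coord_pow_8 by metis
  then have n: "1 \<le> nilidx X" "bpow X (nilidx X) = zeroB" "nilidx X \<le> 8"
    unfolding nilidx_def by (metis (mono_tags, lifting) LeastI Least_le one_le_numeral)+
  let ?t = "\<lambda>k. map_coord ((*) (c k)) (coord_pow (coordsB X) k)"
  have "[1..<8] = [1..<nilidx X] @ [nilidx X..<8]"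
    using n(1,3) upt_add_eq_append[of 1 "nilidx X" "8 - nilidx X"] by simp
  moreover have "coord_pow (coordsB X) (nilidx X) = 0"
    using n(2) pow(2) zeroB_coords by metis
  then have "\<forall>y\<in>set (map ?t [nilidx X..<8]). y = 0"
    by (simp add: coord_pow_eq_0_mono[OF _ n(1)])
  ultimately have series: "coord_series c (coordsB X) = coord_sum (map ?t [1..<nilidx X])"
    unfolding coord_series_def by (simp add: coord_sum_append_zeros)
  have "\<forall>Y\<in>set (map (\<lambda>k. smulB (c k) (bpow X k)) [1..<nilidx X]). Y \<in> Bset"
    using pow smulB_coords by auto
  from sumB_coords[OF this] series show ?thesis
    unfolding nilsum_def by (simp add: comp_def smulB_coords pow)
qed

definition coord_exp1 :: "'a::field_char_0 coord \<Rightarrow> 'a coord" where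
  "coord_exp1 = coord_series (\<lambda>k. 1 / fact k)"

definition coord_log1 :: "'a::field_char_0 coord \<Rightarrow> 'a coord" where
  "coord_log1 = coord_series (\<lambda>k. (-1) ^ (k + 1) / of_nat k)"

definition coord_bch :: "'a::field_char_0 coord \<Rightarrow> 'a coord \<Rightarrow> 'a coord" where
  "coord_bch u v = (let eu = coord_exp1 u; ev = coord_exp1 v in coord_log1 (eu + ev + eu * ev))"

definition coord_gcomm :: "'a::field_char_0 coord \<Rightarrow> 'a coord \<Rightarrow> 'a coord" where
  "coord_gcomm u v =
    coord_bch (coord_bch (coord_bch (map_coord ((*) (-1)) u) (map_coord ((*) (-1)) v)) u) v"

lemma bch_coords:
  fixes X Y :: "'a::field_char_0 ncpoly set"
  assumes "X \<in> Bset" "Y \<in> Bset"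
  shows "bch X Y \<in> Bset \<and> coordsB (bch X Y) = coord_bch (coordsB X) (coordsB Y)"
  using assms
  by (simp add: bch_def coord_bch_def log1pB_def coord_log1_def expm1B_def coord_exp1_def
      nilsum_coords addB_coords mulB_coords Let_def)

lemma giter_coords:
  fixes u v :: "'a::field_char_0 ncpoly set"
  assumes "u \<in> Bset" "v \<in> Bset"
  shows "giter u v k \<in> Bset \<and>
    coordsB (giter u v k) = ((\<lambda>w. coord_gcomm w (coordsB v)) ^^ k) (coordsB u)"
  using assms by (induction k) (simp_all add: gcomm_def coord_gcomm_def bch_coords negB_coords)

text \<open>c_k is the coordinate vector of the group commutator (x,_k y); naming the intermediate
  commutators keeps each evaluation to a single application of coord_gcomm.\<close>

lemma coord_gcomm_x_5y:
  "((\<lambda>w. coord_gcomm w (coords (mon [gy]))) ^^ 5) (coords (mon [gx]))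
    = map_coord ((*) (12 / 5)) (coords (mon w1) :: 'a::field_char_0 coord)"
proof -
  define y :: "'a coord" where "y = Coord 0 1 0 0 0 0 0 0 0 0 0 0 0 0 0 0 0 0 0 0 0 0 0 0 0 0"
  define c0 :: "'a coord" where "c0 =
    Coord 1 0 0 0 0 0 0 0 0 0 0 0 0 0 0 0 0 0 0 0 0 0 0 0 0 0"
  define c1 :: "'a coord" where "c1 =
    Coord 0 0 1 (- 1) 0 1 (1 / 2) (- 1) (1 / 2) 0 (1 / 2) (1 / 6) (- (1 / 2))
    (- (1 / 2)) (1 / 2) (- (1 / 6)) (1 / 4) (1 / 6) 0 (- (1 / 6)) (1 / 4) (- (1 / 6))
    (5 / 12) 0 (- (5 / 12)) 0"
  define c2 :: "'a coord" where "c2 =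
    Coord 0 0 0 0 0 0 1 (- 2) 1 0 1 1 (- 1) (- 3) 3 (- 1) (1 / 2) (- 1) (- 4)
    (- (7 / 3)) (1 / 2) (- (7 / 3)) (- (61 / 6)) 0 (61 / 6) (2 / 3)"
  define c3 :: "'a coord" where "c3 =
    Coord 0 0 0 0 0 0 0 0 0 0 0 1 0 (- 3) 3 (- 1) 1 0 (- 2) (- 6) 1 (- 6) (- 17) 0 17
    (217 / 3)"
  define c4 :: "'a coord" where "c4 =
    Coord 0 0 0 0 0 0 0 0 0 0 0 0 0 0 0 0 0 0 0 (- 4) 0 (- 4) (- 6) 0 6 40"
  define c5 :: "'a coord" where "c5 =
    Coord 0 0 0 0 0 0 0 0 0 0 0 0 0 0 0 0 0 0 0 0 0 0 0 0 0 12"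
  note eval = coord_gcomm_def coord_bch_def coord_log1_def coord_exp1_def coord_series_expand
    coord_sum_def zero_coord_def Let_def numeral_eq_Suc
  have "coord_gcomm c0 y = c1"
    unfolding y_def c0_def c1_def by (simp add: eval)
  moreover have "coord_gcomm c1 y = c2"
    unfolding y_def c1_def c2_def by (simp add: eval)
  moreover have "coord_gcomm c2 y = c3"
    unfolding y_def c2_def c3_def by (simp add: eval)
  moreover have "coord_gcomm c3 y = c4"
    unfolding y_def c3_def c4_def by (simp add: eval)
  moreover have "coord_gcomm c4 y = c5"
    unfolding y_def c4_def c5_def by (simp add: eval)
  moreover have "coords (mon [gx]) = c0" "coords (mon [gy]) = y"
      "map_coord ((*) (12 / 5)) (coords (mon w1)) = c5"
    unfolding c0_def y_def c5_def by (simp_all add: coords_def mon_def w1_def)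
  ultimately show ?thesis
    by (simp add: eval_nat_numeral)
qed

theorem corollary1p4:
  shows "(\<forall>u \<in> (Bset :: (gen list \<Rightarrow> 'a::field_char_0) set set). \<forall>v \<in> Bset.
            liter u v 5 = zeroB)
       \<and> \<not> (\<forall>u \<in> (Bset :: (gen list \<Rightarrow> 'a::field_char_0) set set). \<forall>v \<in> Bset.
            giter u v 5 = zeroB)"
proof
  show "\<forall>u \<in> (Bset :: 'a ncpoly set set). \<forall>v \<in> Bset. liter u v 5 = zeroB"
  proof (intro ballI)
    fix u v :: "'a ncpoly set"
    assume "u \<in> Bset" "v \<in> Bset"
    then have "liter u v 5 \<in> Bset" "coordsB (liter u v 5) = 0"
      using liter_coords[of u v 5] by (simp_all add: coord_engel_5)
    then show "liter u v 5 = zeroB"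
      by (simp add: Bset_eq_iff_coordsB_eq zeroB_coords)
  qed
next
  define u :: "'a ncpoly set" where "u = cls (mon [gx])"
  define v :: "'a ncpoly set" where "v = cls (mon [gy])"
  have uv: "u \<in> Bset" "v \<in> Bset" "coordsB u = coords (mon [gx])" "coordsB v = coords (mon [gy])"
    unfolding u_def v_def by (simp_all add: cls_in_Bset coordsB_cls FA_mon)
  then have "giter u v 5 \<in> Bset"
      "coordsB (giter u v 5) = map_coord ((*) (12 / 5)) (coords (mon w1))"
    using giter_coords[of u v 5] by (simp_all add: coord_gcomm_x_5y)
  moreover have "map_coord ((*) (12 / 5)) (coords (mon w1)) \<noteq> (0 :: 'a coord)"
    by (simp add: coords_def mon_def w1_def zero_coord_def)
  ultimately have "giter u v 5 \<noteq> zeroB"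
    by (simp add: Bset_eq_iff_coordsB_eq zeroB_coords)
  then show "\<not> (\<forall>u \<in> (Bset :: 'a ncpoly set set). \<forall>v \<in> Bset. giter u v 5 = zeroB)"
    using uv(1,2) by blast
qed

end
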